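(* Let $0<\alpha<\beta<1$ and $t\geq1$. Let $\mathcal{P}_t'$ be the set of real polynomials $f$ of degree at most $t$ with $f(0)=0$ and $f(1)=1$. Any minimizer $f^\star\in\mathcal{P}_t'$ of \[ \frac{\max_{\lambda\in[0,\alpha]}|f(\lambda)|}{\min_{\lambda\in[\beta,1]}|f(\lambda)|} \] over $\mathcal{P}_t'$ is $t$-equioscillatory on $[0,\alpha]$.
   Context: A polynomial $f$ is called $t$-equioscillatory on an interval $[a,b]$ if there exist points $a\le\gamma_0<\gamma_1<\dots<\gamma_{t-1}\le b$ such that $|f(\gamma_s)|=\max_{\lambda\in[a,b]}|f(\lambda)|$ for all $0\le s\le t-1$ and $f(\gamma_0)=-f(\gamma_1)=f(\gamma_2)=-f(\gamma_3)=\cdots$. The objective is taken to be $+\infty$ when the denominator vanishes. *)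

theory Defs
  imports "HOL-Analysis.Analysis" "HOL-Computational_Algebra.Polynomial" "HOL-Library.Extended_Real"
begin

text \<open>Maximum of |f| on [a,b] (attained, since polynomials are continuous).\<close>
definition max_abs_on :: "real poly \<Rightarrow> real \<Rightarrow> real \<Rightarrow> real" where
  "max_abs_on f a b = (SUP x\<in>{a..b}. \<bar>poly f x\<bar>)"

definition min_abs_on :: "real poly \<Rightarrow> real \<Rightarrow> real \<Rightarrow> real" where
  "min_abs_on f a b = (INF x\<in>{a..b}. \<bar>poly f x\<bar>)"

definition Pt' :: "nat \<Rightarrow> real poly set" where
  "Pt' t = {f. degree f \<le> t \<and> poly f 0 = 0 \<and> poly f 1 = 1}"

definition objective :: "real \<Rightarrow> real \<Rightarrow> real poly \<Rightarrow> ereal" where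
  "objective \<alpha> \<beta> f =
     (if min_abs_on f \<beta> 1 = 0 then \<infinity>
      else ereal (max_abs_on f 0 \<alpha> / min_abs_on f \<beta> 1))"

definition equioscillatory :: "nat \<Rightarrow> real poly \<Rightarrow> real \<Rightarrow> real \<Rightarrow> bool" where
  "equioscillatory t f a b \<longleftrightarrow>
     (\<exists>\<gamma> :: nat \<Rightarrow> real.
        (\<forall>s<t. a \<le> \<gamma> s \<and> \<gamma> s \<le> b) \<and>
        (\<forall>s. s + 1 < t \<longrightarrow> \<gamma> s < \<gamma> (s + 1)) \<and>
        (\<forall>s<t. \<bar>poly f (\<gamma> s)\<bar> = max_abs_on f a b) \<and>
        (\<forall>s. s + 1 < t \<longrightarrow> poly f (\<gamma> (s + 1)) = - poly f (\<gamma> s)))"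

end

theory Submission
  imports Defs
begin

text \<open>If the minimiser \<open>f\<close> did not equioscillate, the points of \<open>[0, \<alpha>]\<close> where \<open>|f|\<close>
  attains its maximum \<open>M\<close> would change sign at most \<open>t - 2\<close> times, so some \<open>q\<close> of degree
  \<open>t - 2\<close>, with all roots in \<open>[0, \<alpha>]\<close>, has the sign of \<open>f\<close> there. Multiplying by \<open>x\<close> and, if
  necessary, by a linear factor vanishing between \<open>\<alpha>\<close> and \<open>\<beta>\<close> gives \<open>p\<close> of degree \<open>t\<close> with
  \<open>p(0) = 0\<close>, of the sign of \<open>f\<close> at the extremal points and \<open>\<le> 0\<close> on \<open>[\<beta>, 1]\<close>, where the
  minimiser is positive. Then \<open>f - \<epsilon> p\<close>, renormalised at \<open>1\<close>, has a strictly smaller objective.\<close>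

fun alternating :: "'a::linorder set \<Rightarrow> 'a set \<Rightarrow> 'a list \<Rightarrow> bool" where
  "alternating A B [] \<longleftrightarrow> True"
| "alternating A B [x] \<longleftrightarrow> x \<in> A"
| "alternating A B (x # y # ys) \<longleftrightarrow> x \<in> A \<and> x < y \<and> alternating B A (y # ys)"

lemma alternating_mono:
  "alternating A B xs \<Longrightarrow> A \<subseteq> A' \<Longrightarrow> B \<subseteq> B' \<Longrightarrow> alternating A' B' xs"
  by (induction A B xs arbitrary: A' B' rule: alternating.induct) auto

lemma alternating_nth:
  "alternating A B xs \<Longrightarrow> i < length xs \<Longrightarrow> xs ! i \<in> (if even i then A else B)"
proof (induction A B xs arbitrary: i rule: alternating.induct)
  case (3 A B x y ys)
  show ?case
  proof (cases i)
    case (Suc j)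
    then have "(y # ys) ! j \<in> (if even j then B else A)"
      using 3 by simp
    with Suc show ?thesis
      by (simp split: if_splits)
  qed (use 3 in simp)
qed auto

lemma alternating_nth_less:
  "alternating A B xs \<Longrightarrow> Suc i < length xs \<Longrightarrow> xs ! i < xs ! Suc i"
  by (induction A B xs arbitrary: i rule: alternating.induct) (auto simp: nth_Cons split: nat.split)

text \<open>The condition on the roots keeps the sign of \<open>q\<close> constant outside the convex hull of
  \<open>A \<union> B\<close>.\<close>
definition sign_separates :: "real poly \<Rightarrow> real set \<Rightarrow> real set \<Rightarrow> bool" where
  "sign_separates q A B \<longleftrightarrow>
     (\<forall>x\<in>A. poly q x > 0) \<and> (\<forall>x\<in>B. poly q x < 0) \<and>
     (\<forall>x. poly q x = 0 \<longrightarrow> (\<exists>u\<in>A \<union> B. u < x) \<and> (\<exists>v\<in>A \<union> B. x < v))"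

lemma sign_separates_one: "sign_separates 1 A {}"
  by (simp add: sign_separates_def)

lemma sign_separates_swap: "sign_separates q B A \<Longrightarrow> sign_separates (- q) A B"
  by (auto simp: sign_separates_def)

lemma poly_same_sign_if_no_root:
  fixes q :: "real poly"
  assumes "x \<le> y" and "\<And>u. x \<le> u \<Longrightarrow> u \<le> y \<Longrightarrow> poly q u \<noteq> 0"
  shows "poly q x * poly q y > 0"
proof (rule ccontr)
  assume "\<not> ?thesis"
  moreover have "poly q x \<noteq> 0" "poly q y \<noteq> 0"
    using assms by auto
  ultimately have neg: "poly q x * poly q y < 0"
    by (simp add: not_less order_le_less)
  then have "x \<noteq> y"
    by (metis mult_less_0_iff not_less_iff_gr_or_eq)
  then obtain u where "x < u" "u < y" "poly q u = 0"
    using poly_IVT[OF _ neg] assms(1) by auto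
  with assms show False by auto
qed

text \<open>Cutting \<open>A\<close> at \<open>r\<close> removes the leading run of \<open>A\<close>-points, so every alternating list of
  the cut sets extends, by \<open>x0\<close> or \<open>y\<close>, to a longer one of the original sets.\<close>
lemma alternating_length_cut:
  assumes "x0 \<in> A" "y \<in> B" "x0 < y" "\<forall>b\<in>B. y \<le> b" "\<forall>a\<in>A. a < r \<or> y < a"
    and bound: "\<And>xs. alternating A B xs \<or> alternating B A xs \<Longrightarrow> length xs \<le> Suc m"
    and alt: "alternating {a\<in>A. r \<le> a} B xs \<or> alternating B {a\<in>A. r \<le> a} xs"
  shows "length xs \<le> m"
proof (cases xs)
  case (Cons x ys)
  from alt consider "alternating {a\<in>A. r \<le> a} B xs" | "alternating B {a\<in>A. r \<le> a} xs"
    by blast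
  then show ?thesis
  proof cases
    case 1
    then have "alternating A B xs"
      by (rule alternating_mono) auto
    moreover have "y < x"
      using 1 Cons assms(5) by (cases ys) auto
    ultimately have "alternating B A (y # xs)"
      using Cons \<open>y \<in> B\<close> by simp
    then show ?thesis
      using bound[of "y # xs"] by simp
  next
    case 2
    then have "alternating B A xs"
      by (rule alternating_mono) auto
    moreover have "x0 < x"
      using 2 Cons assms(3,4) by (cases ys) fastforce+
    ultimately have "alternating A B (x0 # xs)"
      using Cons \<open>x0 \<in> A\<close> by simp
    then show ?thesis
      using bound[of "x0 # xs"] by simp
  qed
qed simp

lemma sign_separates_mult_linear:
  assumes sep: "sign_separates q {a\<in>A. r \<le> a} B"
    and "z \<in> A" "y \<in> B" "z < r" "r < y" "\<forall>b\<in>B. y \<le> b" "\<forall>a\<in>A. a < r \<or> y < a"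
  shows "sign_separates (q * [:-r, 1:]) A B"
proof -
  have pos: "\<forall>a\<in>A. r \<le> a \<longrightarrow> poly q a > 0" and neg: "\<forall>b\<in>B. poly q b < 0"
    and roots: "\<And>x. poly q x = 0 \<Longrightarrow> \<exists>u\<in>{a\<in>A. r \<le> a} \<union> B. u < x"
    and roots': "\<And>x. poly q x = 0 \<Longrightarrow> \<exists>v\<in>{a\<in>A. r \<le> a} \<union> B. x < v"
    using sep by (auto simp: sign_separates_def)
  have "poly q x \<noteq> 0" if "x \<le> y" for x
  proof
    assume "poly q x = 0"
    then obtain u where "u \<in> {a\<in>A. r \<le> a} \<union> B" "u < x"
      using roots by blast
    with that assms(5-7) show False by fastforce
  qed
  then have "poly q x * poly q y > 0" if "x \<le> y" for x
    using that by (intro poly_same_sign_if_no_root) auto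
  then have low: "poly q x < 0" if "x \<le> y" for x
    using that neg \<open>y \<in> B\<close> by (fastforce simp: zero_less_mult_iff)
  show ?thesis
    unfolding sign_separates_def
  proof (intro conjI ballI allI impI)
    fix x assume "x \<in> A"
    show "poly (q * [:-r, 1:]) x > 0"
    proof (cases "x < r")
      case True
      then show ?thesis
        using low[of x] \<open>r < y\<close> by (simp add: mult_neg_neg)
    next
      case False
      then show ?thesis
        using pos \<open>x \<in> A\<close> assms(5,7) by (fastforce intro: mult_pos_pos)
    qed
  next
    fix x assume "x \<in> B"
    then show "poly (q * [:-r, 1:]) x < 0"
      using neg assms(5,6) by (fastforce simp: mult_neg_pos)
  next
    fix x assume "poly (q * [:-r, 1:]) x = 0"
    then have "poly q x = 0 \<or> x = r"
      by auto
    then consider "poly q x = 0" | "x = r"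
      by blast
    then show "\<exists>u\<in>A \<union> B. u < x"
      by cases (use roots assms(2,4) in blast)+
    from \<open>poly q x = 0 \<or> x = r\<close> show "\<exists>v\<in>A \<union> B. x < v"
      using roots' assms(3,5) by blast
  qed
qed

lemma sign_separating_const_exists:
  assumes "A \<inter> B = {}"
    and bound: "\<And>xs. alternating A B xs \<or> alternating B A xs \<Longrightarrow> length xs \<le> 1"
  shows "\<exists>q. degree q = 0 \<and> sign_separates q A B"
proof (cases "B = {}")
  case True
  then show ?thesis
    using sign_separates_one by (intro exI[of _ 1]) auto
next
  case False
  then obtain y where "y \<in> B"
    by blast
  have "A = {}"
  proof
    show "A \<subseteq> {}"
    proof
      fix x assume "x \<in> A"
      with \<open>y \<in> B\<close> assms(1) have "alternating A B [x, y] \<or> alternating B A [y, x]"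
        by (cases "x < y") (auto simp: not_less order_le_less)
      with bound show "x \<in> {}"
        by fastforce
    qed
  qed simp
  then have "sign_separates (- 1) A B"
    using sign_separates_one sign_separates_swap by blast
  then show ?thesis
    by (intro exI[of _ "- 1"]) simp
qed

text \<open>The separating polynomial of the sets cut at \<open>r\<close>, which lies between the leading run of
  \<open>A\<close>-points and the first \<open>B\<close>-point, gets the extra root \<open>r\<close>.\<close>
lemma sign_separating_poly_step:
  fixes A B :: "real set"
  assumes "compact A" "compact B" "A \<inter> B = {}"
    and bound: "\<And>xs. alternating A B xs \<or> alternating B A xs \<Longrightarrow> length xs \<le> Suc (Suc m)"
    and "x0 \<in> A" "\<forall>u\<in>A \<union> B. x0 \<le> u"
    and IH: "\<And>A'. compact A' \<Longrightarrow> A' \<inter> B = {} \<Longrightarrow>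
      (\<And>xs. alternating A' B xs \<or> alternating B A' xs \<Longrightarrow> length xs \<le> Suc m) \<Longrightarrow>
      \<exists>q. degree q \<le> m \<and> sign_separates q A' B"
  shows "\<exists>q. degree q \<le> Suc m \<and> sign_separates q A B"
proof (cases "B = {}")
  case True
  then show ?thesis
    using sign_separates_one by (intro exI[of _ 1]) auto
next
  case False
  then obtain y where "y \<in> B" and y_min: "\<forall>b\<in>B. y \<le> b"
    using compact_attains_inf[OF \<open>compact B\<close>] by blast
  have "x0 < y"
    using assms(3,5,6) \<open>y \<in> B\<close> by (fastforce simp: order_le_less)
  have "compact (A \<inter> {..y})" and "x0 \<in> A \<inter> {..y}"
    using \<open>compact A\<close> \<open>x0 \<in> A\<close> \<open>x0 < y\<close> by auto
  then obtain z where "z \<in> A" "z \<le> y" and z_max: "\<forall>a\<in>A. a \<le> y \<longrightarrow> a \<le> z"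
    using compact_attains_sup[of "A \<inter> {..y}"] by blast
  have "z < y"
    using \<open>z \<in> A\<close> \<open>z \<le> y\<close> \<open>y \<in> B\<close> assms(3) by (fastforce simp: order_le_less)
  define r where "r = (z + y) / 2"
  have "z < r" "r < y"
    using \<open>z < y\<close> by (simp_all add: r_def)
  have gap: "\<forall>a\<in>A. a < r \<or> y < a"
    using z_max \<open>z < r\<close> by fastforce
  have "compact {a\<in>A. r \<le> a}"
    using compact_Int_closed[OF \<open>compact A\<close> closed_atLeast] by (simp add: Int_def)
  moreover have "{a\<in>A. r \<le> a} \<inter> B = {}"
    using assms(3) by blast
  moreover have "length xs \<le> Suc m"
    if "alternating {a\<in>A. r \<le> a} B xs \<or> alternating B {a\<in>A. r \<le> a} xs" for xs
    using alternating_length_cut[OF \<open>x0 \<in> A\<close> \<open>y \<in> B\<close> \<open>x0 < y\<close> y_min gap bound that] .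
  ultimately obtain q where "degree q \<le> m" "sign_separates q {a\<in>A. r \<le> a} B"
    using IH by blast
  then have "sign_separates (q * [:-r, 1:]) A B"
    using sign_separates_mult_linear \<open>z \<in> A\<close> \<open>y \<in> B\<close> \<open>z < r\<close> \<open>r < y\<close> y_min gap by blast
  moreover have "degree (q * [:-r, 1:]) \<le> Suc m"
    using \<open>degree q \<le> m\<close> degree_mult_le[of q "[:-r, 1:]"] by simp
  ultimately show ?thesis
    by blast
qed

lemma sign_separating_poly_exists:
  fixes A B :: "real set"
  assumes "compact A" "compact B" "A \<inter> B = {}"
    and "\<And>xs. alternating A B xs \<or> alternating B A xs \<Longrightarrow> length xs \<le> Suc m"
  shows "\<exists>q. degree q \<le> m \<and> sign_separates q A B"
  using assms
proof (induction m arbitrary: A B)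
  case 0
  then show ?case
    using sign_separating_const_exists[of A B] by auto
next
  case (Suc m)
  show ?case
  proof (cases "A \<union> B = {}")
    case True
    then show ?thesis
      using sign_separates_one by (intro exI[of _ 1]) auto
  next
    case False
    moreover have "compact (A \<union> B)"
      using Suc.prems by blast
    ultimately obtain x0 where x0: "x0 \<in> A \<union> B" "\<forall>u\<in>A \<union> B. x0 \<le> u"
      using compact_attains_inf by blast
    show ?thesis
    proof (cases "x0 \<in> A")
      case True
      show ?thesis
        by (rule sign_separating_poly_step[of A B m x0]) (use Suc True x0 in auto)
    next
      case False
      have "\<exists>q. degree q \<le> Suc m \<and> sign_separates q B A"
        by (rule sign_separating_poly_step[of B A m x0]) (use Suc False x0 in auto)
      then show ?thesis
        using sign_separates_swap by (metis degree_minus)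
    qed
  qed
qed

lemma max_abs_on_attained:
  assumes "a \<le> b"
  obtains x where "x \<in> {a..b}" "max_abs_on f a b = \<bar>poly f x\<bar>"
    "\<forall>y\<in>{a..b}. \<bar>poly f y\<bar> \<le> max_abs_on f a b"
proof -
  have cont: "continuous_on {a..b} (\<lambda>x. \<bar>poly f x\<bar>)"
    by (intro continuous_intros)
  obtain x where x: "x \<in> {a..b}" "\<forall>y\<in>{a..b}. \<bar>poly f y\<bar> \<le> \<bar>poly f x\<bar>"
    using continuous_attains_sup[OF compact_Icc _ cont] assms by auto
  then have "max_abs_on f a b = \<bar>poly f x\<bar>"
    unfolding max_abs_on_def by (intro cSup_eq_maximum) auto
  with x that show ?thesis
    by auto
qed

lemma min_abs_on_attained:
  assumes "a \<le> b"
  obtains x where "x \<in> {a..b}" "min_abs_on f a b = \<bar>poly f x\<bar>"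
    "\<forall>y\<in>{a..b}. min_abs_on f a b \<le> \<bar>poly f y\<bar>"
proof -
  have cont: "continuous_on {a..b} (\<lambda>x. \<bar>poly f x\<bar>)"
    by (intro continuous_intros)
  obtain x where x: "x \<in> {a..b}" "\<forall>y\<in>{a..b}. \<bar>poly f x\<bar> \<le> \<bar>poly f y\<bar>"
    using continuous_attains_inf[OF compact_Icc _ cont] assms by auto
  then have "min_abs_on f a b = \<bar>poly f x\<bar>"
    unfolding min_abs_on_def by (intro cInf_eq_minimum) auto
  with x that show ?thesis
    by auto
qed

lemma max_abs_on_pos:
  assumes "f \<noteq> 0" "a < b"
  shows "max_abs_on f a b > 0"
proof (rule ccontr)
  assume nonpos: "\<not> ?thesis"
  have "\<forall>y\<in>{a..b}. \<bar>poly f y\<bar> \<le> max_abs_on f a b"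
    by (rule max_abs_on_attained[of a b f]) (use assms(2) in auto)
  with nonpos have "{a..b} \<subseteq> {x. poly f x = 0}"
    by (auto simp: not_less dest!: bspec intro: order_antisym)
  then show False
    using finite_subset[OF _ poly_roots_finite[OF \<open>f \<noteq> 0\<close>]] infinite_Icc[OF \<open>a < b\<close>] by blast
qed

lemma compact_poly_level:
  fixes f :: "real poly"
  assumes "compact K"
  shows "compact {x\<in>K. poly f x = c}"
proof -
  have "closed {x. poly f x = c}"
    by (intro closed_Collect_eq continuous_on_poly continuous_on_id continuous_on_const)
  moreover have "{x\<in>K. poly f x = c} = K \<inter> {x. poly f x = c}"
    by blast
  ultimately show ?thesis
    using compact_Int_closed[OF assms] by simp
qed

lemma equioscillatory_if_alternating:
  assumes "\<bar>c\<bar> = max_abs_on f a b" and "t \<le> length xs"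
    and alt: "alternating {x\<in>{a..b}. poly f x = c} {x\<in>{a..b}. poly f x = - c} xs"
  shows "equioscillatory t f a b"
proof -
  have val: "xs ! i \<in> {a..b} \<and> poly f (xs ! i) = (-1) ^ i * c" if "i < t" for i
    using alternating_nth[OF alt, of i] that assms(2) by (cases "even i") auto
  show ?thesis
    unfolding equioscillatory_def
  proof (intro exI[of _ "(!) xs"] conjI allI impI)
    fix s assume "s < t"
    then show "a \<le> xs ! s" "xs ! s \<le> b" "\<bar>poly f (xs ! s)\<bar> = max_abs_on f a b"
      using val[of s] assms(1) by (auto simp: abs_mult)
  next
    fix s assume "s + 1 < t"
    then show "xs ! s < xs ! (s + 1)"
      using alternating_nth_less[OF alt, of s] assms(2) by simp
    show "poly f (xs ! (s + 1)) = - poly f (xs ! s)"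
      using val[of s] val[of "s + 1"] \<open>s + 1 < t\<close> by simp
  qed
qed

lemma equioscillatory_one:
  assumes "a \<le> b"
  shows "equioscillatory 1 f a b"
proof -
  obtain x where "x \<in> {a..b}" "max_abs_on f a b = \<bar>poly f x\<bar>"
    using max_abs_on_attained[OF assms, of f] by blast
  then show ?thesis
    using equioscillatory_if_alternating[of "poly f x" f a b 1 "[x]"] by simp
qed

lemma continuous_on_compact_below:
  fixes g :: "'a::topological_space \<Rightarrow> real"
  assumes "compact K" "continuous_on K g" "\<forall>x\<in>K. g x < M"
  obtains M' where "M' < M" "\<forall>x\<in>K. g x \<le> M'"
proof (cases "K = {}")
  case True
  then show ?thesis
    using that[of "M - 1"] by simp
next
  case False
  then obtain k where "k \<in> K" "\<forall>x\<in>K. g x \<le> g k"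
    using continuous_attains_sup[OF assms(1) False assms(2)] by blast
  with assms(3) that show ?thesis
    by blast
qed

text \<open>Away from the points where \<open>|f| = M\<close> and \<open>p\<close> pushes \<open>f\<close> towards \<open>0\<close>, \<open>|f|\<close> stays below
  some \<open>M' < M\<close> by compactness; there a small step keeps \<open>|f - \<epsilon> p| < M\<close>, and elsewhere the step
  goes towards \<open>0\<close> by less than \<open>|f|\<close>.\<close>
lemma perturbation_below_sup:
  fixes f p :: "'a::metric_space \<Rightarrow> real"
  assumes "compact S" "continuous_on S f" "continuous_on S p" "0 < M"
    and bound: "\<forall>x\<in>S. \<bar>f x\<bar> \<le> M" and extremal: "\<forall>x\<in>S. \<bar>f x\<bar> = M \<longrightarrow> p x * f x > 0"
  shows "\<exists>\<epsilon>>0. \<forall>x\<in>S. \<bar>f x - \<epsilon> * p x\<bar> < M"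
proof -
  obtain P where "P > 0" and P: "\<forall>x\<in>S. \<bar>p x\<bar> \<le> P"
    using compact_imp_bounded[OF compact_continuous_image[OF assms(3,1)]]
    by (auto simp: bounded_pos)
  define K where "K = {x\<in>S. \<bar>f x\<bar> \<le> M / 2} \<union> {x\<in>S. p x * f x \<le> 0}"
  have "closed K"
    unfolding K_def using compact_imp_closed[OF assms(1)] assms(2,3)
    by (intro closed_Un continuous_on_closed_Collect_le continuous_intros) auto
  moreover have "S \<inter> K = K"
    by (auto simp: K_def)
  ultimately have "compact K"
    using compact_Int_closed[OF assms(1)] by metis
  moreover have "continuous_on K (\<lambda>x. \<bar>f x\<bar>)"
    using assms(2) by (intro continuous_intros) (auto simp: K_def intro: continuous_on_subset)
  moreover have "\<forall>x\<in>K. \<bar>f x\<bar> < M"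
    using bound extremal \<open>0 < M\<close> by (force simp: K_def)
  ultimately obtain M' where "M' < M" and M': "\<forall>x\<in>K. \<bar>f x\<bar> \<le> M'"
    by (rule continuous_on_compact_below)
  define \<epsilon> where "\<epsilon> = min M (M - M') / (2 * P)"
  have "\<epsilon> > 0"
    using \<open>0 < M\<close> \<open>M' < M\<close> \<open>P > 0\<close> by (simp add: \<epsilon>_def)
  have small: "\<bar>\<epsilon> * p x\<bar> \<le> min M (M - M') / 2" if "x \<in> S" for x
  proof -
    have "\<bar>\<epsilon> * p x\<bar> \<le> \<epsilon> * P"
      using P that \<open>\<epsilon> > 0\<close> by (simp add: abs_mult mult_left_mono)
    also have "\<dots> = min M (M - M') / 2"
      using \<open>P > 0\<close> by (simp add: \<epsilon>_def)
    finally show ?thesis .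
  qed
  have "\<bar>f x - \<epsilon> * p x\<bar> < M" if "x \<in> S" for x
  proof (cases "x \<in> K")
    case True
    then show ?thesis
      using small[OF that] M'[rule_format, OF True] \<open>M' < M\<close>
        abs_triangle_ineq4[of "f x" "\<epsilon> * p x"] min.cobounded2[of M "M - M'"] by argo
  next
    case False
    define e where "e = \<epsilon> * p x"
    have "\<bar>f x\<bar> > M / 2" "e * f x > 0" "\<bar>e\<bar> \<le> M / 2" "\<bar>f x\<bar> \<le> M"
      using False that \<open>\<epsilon> > 0\<close> small[OF that] bound by (auto simp: K_def e_def mult.assoc)
    then show ?thesis
      unfolding e_def[symmetric] by (auto simp: abs_if zero_less_mult_iff)
  qed
  with \<open>\<epsilon> > 0\<close> show ?thesis
    by blast
qed

lemma minimizer_pos_on_right: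
  assumes "0 < \<beta>" "\<beta> < 1" "1 \<le> t" "f \<in> Pt' t"
    and opt: "\<forall>g\<in>Pt' t. objective \<alpha> \<beta> f \<le> objective \<alpha> \<beta> g"
  shows "\<forall>u\<in>{\<beta>..1}. poly f u > 0"
proof -
  have "[:0, 1:] \<in> Pt' t"
    using assms(3) by (simp add: Pt'_def)
  moreover have "\<beta> \<le> min_abs_on [:0, 1:] \<beta> 1"
    unfolding min_abs_on_def using assms(1,2) by (intro cINF_greatest) auto
  ultimately have "objective \<alpha> \<beta> f < \<infinity>"
    using opt assms(1) by (force simp: objective_def)
  then have "min_abs_on f \<beta> 1 \<noteq> 0"
    by (auto simp: objective_def)
  moreover obtain x where "min_abs_on f \<beta> 1 = \<bar>poly f x\<bar>"
    and min: "\<forall>u\<in>{\<beta>..1}. min_abs_on f \<beta> 1 \<le> \<bar>poly f u\<bar>"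
    using min_abs_on_attained[of \<beta> 1 f] assms(2) by auto
  ultimately have nonzero: "poly f u \<noteq> 0" if "u \<in> {\<beta>..1}" for u
    using that by fastforce
  have "poly f u * poly f 1 > 0" if "u \<in> {\<beta>..1}" for u
    using that nonzero by (intro poly_same_sign_if_no_root) auto
  moreover have "poly f 1 = 1"
    using \<open>f \<in> Pt' t\<close> by (simp add: Pt'_def)
  ultimately show ?thesis
    by simp
qed

lemma descent_direction_exists:
  fixes f :: "real poly"
  assumes "0 < \<alpha>" "\<alpha> < \<beta>" "2 \<le> t" "poly f 0 = 0"
    and M: "M = max_abs_on f 0 \<alpha>" "0 < M"
    and not_eq: "\<not> equioscillatory t f 0 \<alpha>"
  obtains p where "degree p \<le> t" "poly p 0 = 0"
    "\<forall>x\<in>{0..\<alpha>}. \<bar>poly f x\<bar> = M \<longrightarrow> poly p x * poly f x > 0"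
    "\<forall>u\<ge>\<beta>. poly p u \<le> 0"
proof -
  define A where "A = {x\<in>{0..\<alpha>}. poly f x = M}"
  define B where "B = {x\<in>{0..\<alpha>}. poly f x = - M}"
  have "length xs \<le> Suc (t - 2)" if "alternating A B xs \<or> alternating B A xs" for xs
  proof (rule ccontr)
    assume "\<not> ?thesis"
    then have "t \<le> length xs"
      by simp
    with that have "equioscillatory t f 0 \<alpha>"
      using equioscillatory_if_alternating[of M f 0 \<alpha> t xs]
        equioscillatory_if_alternating[of "- M" f 0 \<alpha> t xs] M
      by (auto simp: A_def B_def)
    with not_eq show False ..
  qed
  moreover have "compact A" "compact B" "A \<inter> B = {}"
    using compact_poly_level[OF compact_Icc] \<open>0 < M\<close> by (auto simp: A_def B_def)
  ultimately obtain q where "degree q \<le> t - 2" and sep: "sign_separates q A B"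
    using sign_separating_poly_exists by blast
  have q_sign: "poly q x * poly f x > 0" if "x \<in> {0..\<alpha>}" "\<bar>poly f x\<bar> = M" for x
    using that sep \<open>0 < M\<close> by (cases "poly f x = M") (auto simp: sign_separates_def A_def B_def abs_if
        split: if_splits intro: mult_neg_neg)
  have "poly q u \<noteq> 0" if "\<alpha> \<le> u" for u
    using sep that by (fastforce simp: sign_separates_def A_def B_def)
  then have q_right: "poly q u * poly q \<beta> > 0" if "\<beta> \<le> u" for u
    using that \<open>\<alpha> < \<beta>\<close> poly_same_sign_if_no_root[of \<beta> u q] by (simp add: mult.commute)
  define w where "w = (\<alpha> + \<beta>) / 2"
  define s where "s = (if poly q \<beta> < 0 then 1 else [:w, -1:])"
  have "degree s \<le> 1"
    by (simp add: s_def)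
  have s_left: "poly s x > 0" if "x \<le> \<alpha>" for x
    using that \<open>\<alpha> < \<beta>\<close> by (simp add: s_def w_def)
  have s_right: "poly q u * poly s u < 0" if "\<beta> \<le> u" for u
    using q_right[OF that] that \<open>\<alpha> < \<beta>\<close>
    by (auto simp: s_def w_def zero_less_mult_iff mult_less_0_iff)
  define p where "p = [:0, 1:] * q * s"
  show ?thesis
  proof (rule that[of p])
    show "degree p \<le> t"
      using \<open>degree q \<le> t - 2\<close> \<open>degree s \<le> 1\<close> \<open>2 \<le> t\<close>
        degree_mult_le[of "[:0, 1:] * q" s] degree_mult_le[of "[:0, 1:]" q] by (simp add: p_def)
    show "poly p 0 = 0"
      by (simp add: p_def)
    show "\<forall>x\<in>{0..\<alpha>}. \<bar>poly f x\<bar> = M \<longrightarrow> poly p x * poly f x > 0"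
    proof (intro ballI impI)
      fix x assume x: "x \<in> {0..\<alpha>}" "\<bar>poly f x\<bar> = M"
      then have "x > 0"
        using \<open>poly f 0 = 0\<close> \<open>0 < M\<close> by (cases "x = 0") auto
      then have "x * poly s x * (poly q x * poly f x) > 0"
        using q_sign[OF x] s_left x by simp
      then show "poly p x * poly f x > 0"
        by (simp add: p_def algebra_simps)
    qed
    show "\<forall>u\<ge>\<beta>. poly p u \<le> 0"
    proof (intro allI impI)
      fix u assume "\<beta> \<le> u"
      then have "u * (poly q u * poly s u) < 0"
        using s_right \<open>0 < \<alpha>\<close> \<open>\<alpha> < \<beta>\<close> by (simp add: mult_pos_neg)
      then show "poly p u \<le> 0"
        by (simp add: p_def algebra_simps)
    qed
  qed
qed

lemma objective_eq_quotient:
  "min_abs_on f \<beta> 1 \<noteq> 0 \<Longrightarrow> objective \<alpha> \<beta> f = ereal (max_abs_on f 0 \<alpha> / min_abs_on f \<beta> 1)"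
  unfolding objective_def by (rule if_not_P)

lemma smult_inverse_value_at_one_in_Pt':
  assumes "degree g \<le> t" "poly g 0 = 0" "poly g 1 \<noteq> 0"
  shows "smult (1 / poly g 1) g \<in> Pt' t"
  using assms degree_smult_le[of "1 / poly g 1" g] by (simp add: Pt'_def)

lemma quotient_less_of_rescaled_bounds:
  fixes a b c m M :: real
  assumes "0 \<le> a" "a < M / c" "m / c \<le> b" "0 < m" "0 < c"
  shows "a / b < M / m"
proof -
  have "0 < b"
    using assms(3-5) by (meson divide_pos_pos order_less_le_trans)
  have "a / b \<le> a / (m / c)"
    using assms(1,3-5) \<open>0 < b\<close> by (intro divide_left_mono) auto
  also have "\<dots> = a * c / m"
    by simp
  also have "\<dots> < M / m"
    using assms(2,4,5) by (intro divide_strict_right_mono) (simp_all add: pos_less_divide_eq)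
  finally show ?thesis .
qed

text \<open>Moving along \<open>p\<close> lowers the maximum on \<open>[0, \<alpha>]\<close> and raises \<open>f\<close> on \<open>[\<beta>, 1]\<close>, so after
  renormalising by the new value \<open>c \<ge> 1\<close> at \<open>1\<close> the numerator drops below \<open>M / c\<close> while the
  denominator stays at least \<open>m / c\<close>.\<close>
lemma objective_improvable:
  assumes "0 < \<alpha>" "\<beta> \<le> 1" "f \<in> Pt' t"
    and pos: "\<forall>u\<in>{\<beta>..1}. poly f u > 0"
    and M: "M = max_abs_on f 0 \<alpha>" "0 < M"
    and p: "degree p \<le> t" "poly p 0 = 0"
      "\<forall>x\<in>{0..\<alpha>}. \<bar>poly f x\<bar> = M \<longrightarrow> poly p x * poly f x > 0"
      "\<forall>u\<in>{\<beta>..1}. poly p u \<le> 0"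
  shows "\<exists>h\<in>Pt' t. objective \<alpha> \<beta> h < objective \<alpha> \<beta> f"
proof -
  have f: "degree f \<le> t" "poly f 0 = 0" "poly f 1 = 1"
    using \<open>f \<in> Pt' t\<close> by (auto simp: Pt'_def)
  define m where "m = min_abs_on f \<beta> 1"
  obtain xm where "xm \<in> {\<beta>..1}" "m = \<bar>poly f xm\<bar>" and m_le: "\<forall>u\<in>{\<beta>..1}. m \<le> \<bar>poly f u\<bar>"
    using min_abs_on_attained[OF \<open>\<beta> \<le> 1\<close>, of f] unfolding m_def by blast
  then have "m > 0"
    using pos[rule_format, of xm] by simp
  have "\<forall>x\<in>{0..\<alpha>}. \<bar>poly f x\<bar> \<le> M"
    by (rule max_abs_on_attained[of 0 \<alpha> f]) (use \<open>0 < \<alpha>\<close> M(1) in auto)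
  then obtain \<epsilon> where "\<epsilon> > 0" and below: "\<forall>x\<in>{0..\<alpha>}. \<bar>poly f x - \<epsilon> * poly p x\<bar> < M"
    using perturbation_below_sup[OF compact_Icc continuous_on_poly continuous_on_poly \<open>0 < M\<close> _ p(3)]
    by (auto intro: continuous_on_id)
  define g where "g = f - smult \<epsilon> p"
  have g_ge: "poly g u \<ge> poly f u" if "u \<in> {\<beta>..1}" for u
    using p(4) that \<open>\<epsilon> > 0\<close> by (simp add: g_def mult_nonneg_nonpos)
  define c where "c = poly g 1"
  have "c \<ge> 1"
    using g_ge[of 1] f(3) \<open>\<beta> \<le> 1\<close> by (simp add: c_def)
  define h where "h = smult (1 / c) g"
  have "h \<in> Pt' t"
    unfolding h_def c_def using f p(1,2) \<open>c \<ge> 1\<close> degree_diff_le[of f t "smult \<epsilon> p"]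
    by (intro smult_inverse_value_at_one_in_Pt') (auto simp: g_def c_def)
  obtain xh where "xh \<in> {0..\<alpha>}" "max_abs_on h 0 \<alpha> = \<bar>poly h xh\<bar>"
    using max_abs_on_attained[OF less_imp_le[OF \<open>0 < \<alpha>\<close>], of h] by blast
  moreover have "\<bar>poly g xh\<bar> < M"
    using below \<open>xh \<in> {0..\<alpha>}\<close> by (simp add: g_def)
  ultimately have max_h: "max_abs_on h 0 \<alpha> < M / c" "0 \<le> max_abs_on h 0 \<alpha>"
    using \<open>c \<ge> 1\<close> by (simp_all add: h_def abs_mult divide_strict_right_mono)
  obtain xl where "xl \<in> {\<beta>..1}" "min_abs_on h \<beta> 1 = \<bar>poly h xl\<bar>"
    using min_abs_on_attained[OF \<open>\<beta> \<le> 1\<close>, of h] by blast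
  moreover have "m \<le> poly g xl"
    using m_le pos g_ge \<open>xl \<in> {\<beta>..1}\<close> by (metis abs_of_pos order_trans)
  ultimately have min_h: "m / c \<le> min_abs_on h \<beta> 1"
    using \<open>c \<ge> 1\<close> \<open>m > 0\<close> by (simp add: h_def divide_right_mono)
  have "max_abs_on h 0 \<alpha> / min_abs_on h \<beta> 1 < M / m"
    using max_h min_h \<open>m > 0\<close> \<open>c \<ge> 1\<close> by (auto intro!: quotient_less_of_rescaled_bounds[where c = c])
  moreover have "objective \<alpha> \<beta> h = ereal (max_abs_on h 0 \<alpha> / min_abs_on h \<beta> 1)"
    using min_h \<open>m > 0\<close> \<open>c \<ge> 1\<close> by (intro objective_eq_quotient) (smt (verit) divide_pos_pos)
  moreover have "objective \<alpha> \<beta> f = ereal (M / m)"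
    using \<open>m > 0\<close> unfolding M m_def by (intro objective_eq_quotient) simp
  ultimately have "objective \<alpha> \<beta> h < objective \<alpha> \<beta> f"
    by (simp only: less_ereal.simps(1))
  with \<open>h \<in> Pt' t\<close> show ?thesis
    by blast
qed

theorem lemma3:
  fixes \<alpha> \<beta> :: real and t :: nat and fstar :: "real poly"
  assumes "0 < \<alpha>" and "\<alpha> < \<beta>" and "\<beta> < 1" and "t \<ge> 1"
    and "fstar \<in> Pt' t"
    and "\<forall>g\<in>Pt' t. objective \<alpha> \<beta> fstar \<le> objective \<alpha> \<beta> g"
  shows "equioscillatory t fstar 0 \<alpha>"
proof (cases "t = 1")
  case True
  then show ?thesis
    using equioscillatory_one assms(1) by simp
next
  case False
  define M where "M = max_abs_on fstar 0 \<alpha>"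
  have f: "poly fstar 0 = 0" "poly fstar 1 = 1"
    using assms(5) by (auto simp: Pt'_def)
  then have "0 < M"
    using max_abs_on_pos[of fstar 0 \<alpha>] assms(1) by (force simp: M_def)
  have pos: "\<forall>u\<in>{\<beta>..1}. poly fstar u > 0"
    using minimizer_pos_on_right assms by (meson order_less_trans)
  show ?thesis
  proof (rule ccontr)
    assume "\<not> ?thesis"
    then obtain p where "degree p \<le> t" "poly p 0 = 0"
      "\<forall>x\<in>{0..\<alpha>}. \<bar>poly fstar x\<bar> = M \<longrightarrow> poly p x * poly fstar x > 0" "\<forall>u\<ge>\<beta>. poly p u \<le> 0"
      using descent_direction_exists[of \<alpha> \<beta> t fstar M] assms(1,2,4) False f(1) M_def \<open>0 < M\<close>
      by auto
    then obtain h where "h \<in> Pt' t" "objective \<alpha> \<beta> h < objective \<alpha> \<beta> fstar"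
      using objective_improvable[of \<alpha> \<beta> fstar t M p] assms(1,3,5) pos M_def \<open>0 < M\<close> by auto
    with assms(6) show False
      by (meson not_le)
  qed
qed

end
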